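(* Let $\mathcal{C}$ be a category, $J$ a directed partially ordered set, and let $(f,f^j_\mu):\boldsymbol{X}\to\boldsymbol{Y}$ and $(g,g^j_\nu):\boldsymbol{Y}\to\boldsymbol{Z}=(Z_\nu,r_{\nu\nu'},N)$ be $J$-morphisms of inverse systems in $\mathcal{C}$, where $\boldsymbol{X}=(X_\lambda,p_{\lambda\lambda'},\Lambda)$, $\boldsymbol{Y}=(Y_\mu,q_{\mu\mu'},M)$. Then $(h,h^j_\nu)$ with $h=fg:N\to\Lambda$ and $h^j_\nu=g^j_\nu f^j_{g(\nu)}:X_{fg(\nu)}\to Z_\nu$ ($j\in J$, $\nu\in N$) is a $J$-morphism of $\boldsymbol{X}$ to $\boldsymbol{Z}$.
   Context: An inverse system $\boldsymbol{X}=(X_\lambda,p_{\lambda\lambda'},\Lambda)$ in $\mathcal{C}$: $\Lambda$ directed preordered, morphisms $p_{\lambda\lambda'}:X_{\lambda'}\to X_\lambda$ for $\lambda\le\lambda'$, $p_{\lambda\lambda}=1$, $p_{\lambda\lambda'}p_{\lambda'\lambda''}=p_{\lambda\lambda''}$. A $J$-morphism $(f,f^j_\mu):\boldsymbol{X}\to\boldsymbol{Y}=(Y_\mu,q_{\mu\mu'},M)$ consists of a function $f:M\to\Lambda$ and $\mathcal{C}$-morphisms $f^j_\mu:X_{f(\mu)}\to Y_\mu$ ($\mu\in M$, $j\in J$) such that for all $\mu\le\mu'$ there exist $\lambda\ge f(\mu),f(\mu')$ and $j_0\in J$ with $f^{j'}_\mu p_{f(\mu)\lambda}=q_{\mu\mu'}f^{j'}_{\mu'}p_{f(\mu')\lambda}$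 for all $j'\ge j_0$. *)

theory Defs
  imports Main
begin

text \<open>A (small or large) category given by a set of objects, a set of arrows,
domain, codomain, identities and composition.  Comp g f is "g after f".\<close>

record ('o, 'a) category =
  Obj  :: "'o set"
  Arr  :: "'a set"
  Dom  :: "'a \<Rightarrow> 'o"
  Cod  :: "'a \<Rightarrow> 'o"
  Ide  :: "'o \<Rightarrow> 'a"
  Comp :: "'a \<Rightarrow> 'a \<Rightarrow> 'a"

definition is_category :: "('o, 'a, 'e) category_scheme \<Rightarrow> bool" where
  "is_category C \<longleftrightarrow>
     (\<forall>u \<in> Arr C. Dom C u \<in> Obj C \<and> Cod C u \<in> Obj C) \<and>
     (\<forall>x \<in> Obj C. Ide C x \<in> Arr C \<and> Dom C (Ide C x) = x \<and> Cod C (Ide C x) = x) \<and>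
     (\<forall>u \<in> Arr C. \<forall>v \<in> Arr C. Cod C u = Dom C v \<longrightarrow>
        Comp C v u \<in> Arr C \<and> Dom C (Comp C v u) = Dom C u \<and> Cod C (Comp C v u) = Cod C v) \<and>
     (\<forall>u \<in> Arr C. \<forall>v \<in> Arr C. \<forall>w \<in> Arr C. Cod C u = Dom C v \<longrightarrow> Cod C v = Dom C w \<longrightarrow>
        Comp C w (Comp C v u) = Comp C (Comp C w v) u) \<and>
     (\<forall>u \<in> Arr C. Comp C u (Ide C (Dom C u)) = u \<and> Comp C (Ide C (Cod C u)) u = u)"

definition hom_in :: "('o, 'a, 'e) category_scheme \<Rightarrow> 'a \<Rightarrow> 'o \<Rightarrow> 'o \<Rightarrow> bool" where
  "hom_in C u x y \<longleftrightarrow> u \<in> Arr C \<and> Dom C u = x \<and> Cod C u = y"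

definition directed_preorder :: "'i set \<Rightarrow> ('i \<Rightarrow> 'i \<Rightarrow> bool) \<Rightarrow> bool" where
  "directed_preorder A le \<longleftrightarrow> A \<noteq> {} \<and>
     (\<forall>a \<in> A. le a a) \<and>
     (\<forall>a \<in> A. \<forall>b \<in> A. \<forall>c \<in> A. le a b \<longrightarrow> le b c \<longrightarrow> le a c) \<and>
     (\<forall>a \<in> A. \<forall>b \<in> A. \<exists>c \<in> A. le a c \<and> le b c)"

definition directed_poset :: "'i set \<Rightarrow> ('i \<Rightarrow> 'i \<Rightarrow> bool) \<Rightarrow> bool" where
  "directed_poset A le \<longleftrightarrow> directed_preorder A le \<and>
     (\<forall>a \<in> A. \<forall>b \<in> A. le a b \<longrightarrow> le b a \<longrightarrow> a = b)"

definition inverse_system ::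
  "('o, 'a, 'e) category_scheme \<Rightarrow> 'l set \<Rightarrow> ('l \<Rightarrow> 'l \<Rightarrow> bool) \<Rightarrow> ('l \<Rightarrow> 'o)
     \<Rightarrow> ('l \<Rightarrow> 'l \<Rightarrow> 'a) \<Rightarrow> bool" where
  "inverse_system C L le X p \<longleftrightarrow>
     directed_preorder L le \<and>
     (\<forall>l \<in> L. X l \<in> Obj C) \<and>
     (\<forall>l \<in> L. \<forall>l' \<in> L. le l l' \<longrightarrow> hom_in C (p l l') (X l') (X l)) \<and>
     (\<forall>l \<in> L. p l l = Ide C (X l)) \<and>
     (\<forall>l \<in> L. \<forall>l' \<in> L. \<forall>l'' \<in> L. le l l' \<longrightarrow> le l' l'' \<longrightarrow>
        Comp C (p l l') (p l' l'') = p l l'')"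

definition J_morphism ::
  "('o, 'a, 'e) category_scheme \<Rightarrow> 'j set \<Rightarrow> ('j \<Rightarrow> 'j \<Rightarrow> bool)
     \<Rightarrow> 'l set \<Rightarrow> ('l \<Rightarrow> 'l \<Rightarrow> bool) \<Rightarrow> ('l \<Rightarrow> 'o) \<Rightarrow> ('l \<Rightarrow> 'l \<Rightarrow> 'a)
     \<Rightarrow> 'm set \<Rightarrow> ('m \<Rightarrow> 'm \<Rightarrow> bool) \<Rightarrow> ('m \<Rightarrow> 'o) \<Rightarrow> ('m \<Rightarrow> 'm \<Rightarrow> 'a)
     \<Rightarrow> ('m \<Rightarrow> 'l) \<Rightarrow> ('j \<Rightarrow> 'm \<Rightarrow> 'a) \<Rightarrow> bool" where
  "J_morphism C J leJ L leL X p M leM Y q f fj \<longleftrightarrow>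
     (\<forall>m \<in> M. f m \<in> L) \<and>
     (\<forall>j \<in> J. \<forall>m \<in> M. hom_in C (fj j m) (X (f m)) (Y m)) \<and>
     (\<forall>m \<in> M. \<forall>m' \<in> M. leM m m' \<longrightarrow>
        (\<exists>l \<in> L. leL (f m) l \<and> leL (f m') l \<and>
          (\<exists>j0 \<in> J. \<forall>j' \<in> J. leJ j0 j' \<longrightarrow>
             Comp C (fj j' m) (p (f m) l) = Comp C (q m m') (Comp C (fj j' m') (p (f m') l)))))"

end

theory Submission
  imports Defs
begin

text \<open>Given \<open>\<nu> \<le> \<nu>'\<close>, the morphism \<open>g\<close> yields \<open>\<mu> \<ge> g \<nu>, g \<nu>'\<close> at which the
  \<open>g\<close>-square commutes for large \<open>j\<close>; applying \<open>f\<close> to \<open>g \<nu> \<le> \<mu>\<close> and to \<open>g \<nu>' \<le> \<mu>\<close>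
  gives two \<open>f\<close>-squares, which commute at every index above some \<open>\<lambda>\<^sub>1\<close> resp.
  \<open>\<lambda>\<^sub>2\<close>.  Over a common upper bound \<open>\<lambda>\<close> of \<open>\<lambda>\<^sub>1, \<lambda>\<^sub>2\<close> and for \<open>j\<close> above all three
  thresholds, the three squares paste to the square of the composite.\<close>

lemma hom_in_comp:
  assumes "is_category C" "hom_in C u x y" "hom_in C v y z"
  shows "hom_in C (Comp C v u) x z"
  using assms unfolding is_category_def hom_in_def by auto

lemma comp_assoc:
  assumes "is_category C" "hom_in C u x y" "hom_in C v y z" "hom_in C w z t"
  shows "Comp C (Comp C w v) u = Comp C w (Comp C v u)"
  using assms unfolding is_category_def hom_in_def by metis

lemma comp_paste_squares:
  assumes C: "is_category C"
    and pa: "hom_in C pa P A" and a: "hom_in C a A B" and b: "hom_in C b B D"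
    and c: "hom_in C c P E" and qa: "hom_in C qa E B" and qb: "hom_in C qb E B'"
    and pa': "hom_in C pa' P A'" and a': "hom_in C a' A' B'" and b': "hom_in C b' B' D'"
    and s: "hom_in C s D' D"
    and left: "Comp C a pa = Comp C qa c"
    and middle: "Comp C b qa = Comp C s (Comp C b' qb)"
    and right: "Comp C a' pa' = Comp C qb c"
  shows "Comp C (Comp C b a) pa = Comp C s (Comp C (Comp C b' a') pa')"
proof -
  have "Comp C (Comp C b a) pa = Comp C (Comp C b qa) c"
    using comp_assoc[OF C pa a b] comp_assoc[OF C c qa b] left by simp
  also have "\<dots> = Comp C s (Comp C b' (Comp C qb c))"
    using comp_assoc[OF C qb b' s] comp_assoc[OF C c _ s, of "Comp C b' qb"]
      comp_assoc[OF C c qb b'] hom_in_comp[OF C qb b'] middle by simp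
  also have "\<dots> = Comp C s (Comp C (Comp C b' a') pa')"
    using comp_assoc[OF C pa' a' b'] right by simp
  finally show ?thesis .
qed

lemma directed_preorder_trans:
  assumes "directed_preorder A le" "a \<in> A" "b \<in> A" "c \<in> A" "le a b" "le b c"
  shows "le a c"
  using assms unfolding directed_preorder_def by blast

lemma directed_preorder_finite_upper_bound:
  assumes dir: "directed_preorder A le" and "finite F" "F \<subseteq> A"
  obtains c where "c \<in> A" "\<forall>a \<in> F. le a c"
  using \<open>finite F\<close> \<open>F \<subseteq> A\<close>
proof (induction F arbitrary: thesis rule: finite_induct)
  case empty
  then show ?case using dir unfolding directed_preorder_def by blast
next
  case (insert x F)
  obtain c where c: "c \<in> A" "\<forall>a \<in> F. le a c" using insert by blast
  obtain d where d: "d \<in> A" "le x d" "le c d"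
    using dir c insert.prems(2) unfolding directed_preorder_def by blast
  have "\<forall>a \<in> F. le a d"
    using directed_preorder_trans[OF dir _ c(1) d(1) _ d(3)] c(2) insert.prems(2) by blast
  then show ?case using insert.prems(1) d by blast
qed

lemma inverse_system_directed:
  "inverse_system C L le X p \<Longrightarrow> directed_preorder L le"
  unfolding inverse_system_def by blast

lemma inverse_system_hom:
  "inverse_system C L le X p \<Longrightarrow> l \<in> L \<Longrightarrow> l' \<in> L \<Longrightarrow> le l l' \<Longrightarrow> hom_in C (p l l') (X l') (X l)"
  unfolding inverse_system_def by blast

lemma inverse_system_comp:
  "inverse_system C L le X p \<Longrightarrow> l \<in> L \<Longrightarrow> l' \<in> L \<Longrightarrow> l'' \<in> L \<Longrightarrow> le l l' \<Longrightarrow> le l' l''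
    \<Longrightarrow> Comp C (p l l') (p l' l'') = p l l''"
  unfolding inverse_system_def by blast

lemma J_morphism_index:
  "J_morphism C J leJ L leL X p M leM Y q f fj \<Longrightarrow> m \<in> M \<Longrightarrow> f m \<in> L"
  unfolding J_morphism_def by blast

lemma J_morphism_hom:
  "J_morphism C J leJ L leL X p M leM Y q f fj \<Longrightarrow> j \<in> J \<Longrightarrow> m \<in> M
    \<Longrightarrow> hom_in C (fj j m) (X (f m)) (Y m)"
  unfolding J_morphism_def by blast

lemma J_morphism_commutes_above:
  assumes C: "is_category C"
    and X: "inverse_system C L leL X p" and Y: "inverse_system C M leM Y q"
    and f: "J_morphism C J leJ L leL X p M leM Y q f fj"
    and m: "m \<in> M" "m' \<in> M" "leM m m'"
  obtains l0 j0 where "l0 \<in> L" "leL (f m) l0" "leL (f m') l0" "j0 \<in> J"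
    and "\<And>l j. l \<in> L \<Longrightarrow> leL l0 l \<Longrightarrow> j \<in> J \<Longrightarrow> leJ j0 j \<Longrightarrow>
           Comp C (fj j m) (p (f m) l) = Comp C (q m m') (Comp C (fj j m') (p (f m') l))"
proof -
  obtain l0 j0 where l0: "l0 \<in> L" "leL (f m) l0" "leL (f m') l0" and j0: "j0 \<in> J"
    and sq: "\<And>j. j \<in> J \<Longrightarrow> leJ j0 j \<Longrightarrow>
           Comp C (fj j m) (p (f m) l0) = Comp C (q m m') (Comp C (fj j m') (p (f m') l0))"
    using f m unfolding J_morphism_def by meson
  have fm: "f m \<in> L" "f m' \<in> L" using J_morphism_index[OF f] m by auto
  have "Comp C (fj j m) (p (f m) l) = Comp C (q m m') (Comp C (fj j m') (p (f m') l))"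
    if l: "l \<in> L" "leL l0 l" and j: "j \<in> J" "leJ j0 j" for l j
  proof -
    note hom = inverse_system_hom[OF X] J_morphism_hom[OF f j(1)]
    have p0: "hom_in C (p l0 l) (X l) (X l0)" using hom l l0 by blast
    have pm: "hom_in C (p (f m) l0) (X l0) (X (f m))" "hom_in C (p (f m') l0) (X l0) (X (f m'))"
      using hom l0 fm by auto
    have a: "hom_in C (fj j m) (X (f m)) (Y m)" "hom_in C (fj j m') (X (f m')) (Y m')"
      using hom m by auto
    have qm: "hom_in C (q m m') (Y m') (Y m)" using inverse_system_hom[OF Y] m by blast
    have "Comp C (fj j m) (p (f m) l) = Comp C (Comp C (fj j m) (p (f m) l0)) (p l0 l)"
      using inverse_system_comp[OF X fm(1) l0(1) l(1) l0(2) l(2)] comp_assoc[OF C p0 pm(1) a(1)]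
      by simp
    also have "\<dots> = Comp C (Comp C (q m m') (Comp C (fj j m') (p (f m') l0))) (p l0 l)"
      using sq j by simp
    also have "\<dots> = Comp C (q m m') (Comp C (fj j m') (p (f m') l))"
      using inverse_system_comp[OF X fm(2) l0(1) l(1) l0(3) l(2)] comp_assoc[OF C p0 pm(2) a(2)]
        comp_assoc[OF C p0 hom_in_comp[OF C pm(2) a(2)] qm] by simp
    finally show ?thesis .
  qed
  then show ?thesis using that l0 j0 by blast
qed

lemma J_morphism_comp_commutes:
  assumes C: "is_category C" and J: "directed_preorder J leJ"
    and X: "inverse_system C L leL X p"
    and Y: "inverse_system C M leM Y q"
    and Z: "inverse_system C N leN Z r"
    and f: "J_morphism C J leJ L leL X p M leM Y q f fj"
    and g: "J_morphism C J leJ M leM Y q N leN Z r g gj"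
    and n: "n \<in> N" "n' \<in> N" "leN n n'"
  shows "\<exists>l\<in>L. leL (f (g n)) l \<and> leL (f (g n')) l \<and>
      (\<exists>j0\<in>J. \<forall>j\<in>J. leJ j0 j \<longrightarrow>
        Comp C (Comp C (gj j n) (fj j (g n))) (p (f (g n)) l) =
        Comp C (r n n') (Comp C (Comp C (gj j n') (fj j (g n'))) (p (f (g n')) l)))"
proof -
  have gn: "g n \<in> M" "g n' \<in> M" using J_morphism_index[OF g] n by auto
  obtain m j1 where m: "m \<in> M" "leM (g n) m" "leM (g n') m" and j1: "j1 \<in> J"
    and sq_g: "\<And>j. j \<in> J \<Longrightarrow> leJ j1 j \<Longrightarrow>
           Comp C (gj j n) (q (g n) m) = Comp C (r n n') (Comp C (gj j n') (q (g n') m))"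
    using g n unfolding J_morphism_def by meson
  obtain l1 j2 where l1: "l1 \<in> L" "leL (f (g n)) l1" "leL (f m) l1" "j2 \<in> J"
    and sq_f: "\<And>l j. l \<in> L \<Longrightarrow> leL l1 l \<Longrightarrow> j \<in> J \<Longrightarrow> leJ j2 j \<Longrightarrow>
           Comp C (fj j (g n)) (p (f (g n)) l) = Comp C (q (g n) m) (Comp C (fj j m) (p (f m) l))"
    using J_morphism_commutes_above[OF C X Y f gn(1) m(1,2)] by metis
  obtain l2 j3 where l2: "l2 \<in> L" "leL (f (g n')) l2" "leL (f m) l2" "j3 \<in> J"
    and sq_f': "\<And>l j. l \<in> L \<Longrightarrow> leL l2 l \<Longrightarrow> j \<in> J \<Longrightarrow> leJ j3 j \<Longrightarrow>
           Comp C (fj j (g n')) (p (f (g n')) l) = Comp C (q (g n') m) (Comp C (fj j m) (p (f m) l))"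
    using J_morphism_commutes_above[OF C X Y f gn(2) m(1,3)] by metis
  obtain l where l: "l \<in> L" "leL l1 l" "leL l2 l"
    using directed_preorder_finite_upper_bound[OF inverse_system_directed[OF X], of "{l1, l2}"]
      l1 l2 by auto
  obtain j0 where j0: "j0 \<in> J" "leJ j1 j0" "leJ j2 j0" "leJ j3 j0"
    using directed_preorder_finite_upper_bound[OF J, of "{j1, j2, j3}"] j1 l1 l2 by auto
  have fgn: "f (g n) \<in> L" "f (g n') \<in> L" "f m \<in> L"
    using J_morphism_index[OF f] gn m by auto
  have fl: "leL (f (g n)) l" "leL (f (g n')) l" "leL (f m) l"
    using directed_preorder_trans[OF inverse_system_directed[OF X]] fgn l l1 l2 by meson+
  moreover have "Comp C (Comp C (gj j n) (fj j (g n))) (p (f (g n)) l) =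
      Comp C (r n n') (Comp C (Comp C (gj j n') (fj j (g n'))) (p (f (g n')) l))"
    if j: "j \<in> J" "leJ j0 j" for j
  proof -
    have "leJ j1 j" "leJ j2 j" "leJ j3 j"
      using directed_preorder_trans[OF J] j j0 j1 l1 l2 by meson+
    then have squares:
      "Comp C (fj j (g n)) (p (f (g n)) l) = Comp C (q (g n) m) (Comp C (fj j m) (p (f m) l))"
      "Comp C (gj j n) (q (g n) m) = Comp C (r n n') (Comp C (gj j n') (q (g n') m))"
      "Comp C (fj j (g n')) (p (f (g n')) l) = Comp C (q (g n') m) (Comp C (fj j m) (p (f m) l))"
      using sq_f sq_g sq_f' j(1) l by auto
    note p = inverse_system_hom[OF X _ l(1)] and fj = J_morphism_hom[OF f j(1)]
      and gj = J_morphism_hom[OF g j(1)] and q = inverse_system_hom[OF Y _ m(1)]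
    show ?thesis
      using comp_paste_squares[OF C p[OF fgn(1) fl(1)] fj[OF gn(1)] gj[OF n(1)]
          hom_in_comp[OF C p[OF fgn(3) fl(3)] fj[OF m(1)]] q[OF gn(1) m(2)] q[OF gn(2) m(3)]
          p[OF fgn(2) fl(2)] fj[OF gn(2)] gj[OF n(2)] inverse_system_hom[OF Z n]]
        squares by blast
  qed
  ultimately show ?thesis using l(1) j0(1) by blast
qed

lemma J_morphism_comp:
  assumes C: "is_category C" and J: "directed_preorder J leJ"
    and X: "inverse_system C L leL X p"
    and Y: "inverse_system C M leM Y q"
    and Z: "inverse_system C N leN Z r"
    and f: "J_morphism C J leJ L leL X p M leM Y q f fj"
    and g: "J_morphism C J leJ M leM Y q N leN Z r g gj"
  shows "J_morphism C J leJ L leL X p N leN Z r (f \<circ> g)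
           (\<lambda>j \<nu>. Comp C (gj j \<nu>) (fj j (g \<nu>)))"
  unfolding J_morphism_def comp_apply
proof (intro conjI ballI impI)
  fix n assume "n \<in> N"
  then show "f (g n) \<in> L" using J_morphism_index[OF f] J_morphism_index[OF g] by simp
next
  fix j n assume "j \<in> J" "n \<in> N"
  then show "hom_in C (Comp C (gj j n) (fj j (g n))) (X (f (g n))) (Z n)"
    using hom_in_comp[OF C J_morphism_hom[OF f] J_morphism_hom[OF g]] J_morphism_index[OF g]
    by simp
qed (rule J_morphism_comp_commutes[OF assms])

theorem lemma1:
  fixes C :: "('o, 'a, 'e) category_scheme"
    and J :: "'j set" and leJ :: "'j \<Rightarrow> 'j \<Rightarrow> bool"
    and L :: "'l set" and leL :: "'l \<Rightarrow> 'l \<Rightarrow> bool" and X :: "'l \<Rightarrow> 'o" and p :: "'l \<Rightarrow> 'l \<Rightarrow> 'a"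
    and M :: "'m set" and leM :: "'m \<Rightarrow> 'm \<Rightarrow> bool" and Y :: "'m \<Rightarrow> 'o" and q :: "'m \<Rightarrow> 'm \<Rightarrow> 'a"
    and N :: "'n set" and leN :: "'n \<Rightarrow> 'n \<Rightarrow> bool" and Z :: "'n \<Rightarrow> 'o" and r :: "'n \<Rightarrow> 'n \<Rightarrow> 'a"
    and f :: "'m \<Rightarrow> 'l" and fj :: "'j \<Rightarrow> 'm \<Rightarrow> 'a"
    and g :: "'n \<Rightarrow> 'm" and gj :: "'j \<Rightarrow> 'n \<Rightarrow> 'a"
  assumes "is_category C"
    and "directed_poset J leJ"
    and "inverse_system C L leL X p"
    and "inverse_system C M leM Y q"
    and "inverse_system C N leN Z r"
    and "J_morphism C J leJ L leL X p M leM Y q f fj"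
    and "J_morphism C J leJ M leM Y q N leN Z r g gj"
  shows "J_morphism C J leJ L leL X p N leN Z r (f \<circ> g)
           (\<lambda>j \<nu>. Comp C (gj j \<nu>) (fj j (g \<nu>)))"
  using J_morphism_comp[OF assms(1) _ assms(3-7)] assms(2)
  unfolding directed_poset_def by blast

end
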